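(* In the derived category $\mathcal D(\underline{\mathbb Z/2})$ one has: (a) $A_k^{op}\simeq\Sigma^{-k}A_k$ for $k\ge 0$; (b) $H(n)^{op}\simeq H(-(n+2))$ for all $n\in\mathbb Z$; (c) $B_r^{op}\simeq\Sigma^{r+4}B_r$ for $r\geq0$.
   Context: A $\underline{\mathbb Z/2}$-module is a pair of $\mathbb F_2$-vector spaces $M_\Theta,M_\bullet$ with maps $t\colon M_\Theta\to M_\Theta$, $p^*\colon M_\bullet\to M_\Theta$, $p_*\colon M_\Theta\to M_\bullet$ with $tp^*=p^*$, $p_*t=p_*$, $t^2=1$, $p^*p_*=1+t$, $p_*p^*=0$. $H$: both spaces $\mathbb F_2$, $t=p^*=\mathrm{id}$, $p_*=0$. $F$: $F_\Theta=\mathbb F_2^2$, $t$ the swap, $F_\bullet=\mathbb F_2$, $p_*(x,y)=x+y$, $p^*(z)=(z,z)$. $p\colon F\to H$, $p\colon H\to F$ the unique nonzero maps, $u=1+t$. Homological grading, $(\Sigma C)_i=C_{i-1}$. $A_k$: $F$ in degrees $k,\dots,0$, differentials $u$. $H(0)=H$ in degree $0$; for $n>0$, $H(-n)$: $H$ in degree $n$, $F$ in degrees $n-1,\dots,0$, differentials $p,u,\dots,u$; $H(n)$: $F$ in degrees $0,\dots,-(n-1)$, $H$ in degree $-n$, differentials $u,\dots,u,p$. $B_r$: $H$ in degree $0$, $F$ in degrees $-1,\dots,-(r+1)$, $H$ in degree $-(r+2)$, differentials $p,u,\dots,u,p$. For a module $M$, $M^{op}$ has $(M^{op})_\Theta=(M_\Theta)^\vee$,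 $(M^{op})_\bullet=(M_\bullet)^\vee$ (linear duals), $t_{M^{op}}=t_M^\vee$, $p^*_{M^{op}}=(p_*^M)^\vee$, $p_*^{M^{op}}=(p^*_M)^\vee$. For a complex $C$, $C^{op}$ is the complex with $(C^{op})_i=(C_{-i})^{op}$ and dual differentials; this preserves quasi-isomorphisms and so is defined on $\mathcal D(\underline{\mathbb Z/2})$. *)

theory Defs
  imports "Jordan_Normal_Form.Matrix" "HOL-Library.Z2"
begin

text \<open>A Z/2-module with finite-dimensional M_Theta = F_2^dT and M_bullet = F_2^dB.
  Linear maps F_2^m -> F_2^n are n x m matrices acting on column vectors.
  tm = t, up = p^* : M_bullet -> M_Theta, dn = p_* : M_Theta -> M_bullet.\<close>

record zmod =
  dT :: nat
  dB :: nat
  tm :: "bit mat"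
  up :: "bit mat"
  dn :: "bit mat"

definition is_zmod :: "zmod \<Rightarrow> bool" where
  "is_zmod M \<longleftrightarrow>
     tm M \<in> carrier_mat (dT M) (dT M) \<and>
     up M \<in> carrier_mat (dT M) (dB M) \<and>
     dn M \<in> carrier_mat (dB M) (dT M) \<and>
     tm M * up M = up M \<and>
     dn M * tm M = dn M \<and>
     tm M * tm M = 1\<^sub>m (dT M) \<and>
     up M * dn M = 1\<^sub>m (dT M) + tm M \<and>
     dn M * up M = 0\<^sub>m (dB M) (dB M)"

record zmor =
  mT :: "bit mat"
  mB :: "bit mat"

definition is_zmor :: "zmod \<Rightarrow> zmod \<Rightarrow> zmor \<Rightarrow> bool" where
  "is_zmor M N f \<longleftrightarrow>
     mT f \<in> carrier_mat (dT N) (dT M) \<and>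
     mB f \<in> carrier_mat (dB N) (dB M) \<and>
     mT f * tm M = tm N * mT f \<and>
     mT f * up M = up N * mB f \<and>
     mB f * dn M = dn N * mT f"

definition zcomp :: "zmor \<Rightarrow> zmor \<Rightarrow> zmor" where
  "zcomp g f = \<lparr>mT = mT g * mT f, mB = mB g * mB f\<rparr>"

definition zzero :: "zmod \<Rightarrow> zmod \<Rightarrow> zmor" where
  "zzero M N = \<lparr>mT = 0\<^sub>m (dT N) (dT M), mB = 0\<^sub>m (dB N) (dB M)\<rparr>"

record zcx =
  obj :: "int \<Rightarrow> zmod"
  dif :: "int \<Rightarrow> zmor"

definition is_complex :: "zcx \<Rightarrow> bool" where
  "is_complex C \<longleftrightarrow>
     (\<forall>i. is_zmod (obj C i)) \<and>
     (\<forall>i. is_zmor (obj C i) (obj C (i - 1)) (dif C i)) \<and>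
     (\<forall>i. zcomp (dif C (i - 1)) (dif C i) = zzero (obj C i) (obj C (i - 2)))"

definition is_chain_map :: "zcx \<Rightarrow> zcx \<Rightarrow> (int \<Rightarrow> zmor) \<Rightarrow> bool" where
  "is_chain_map C D f \<longleftrightarrow>
     (\<forall>i. is_zmor (obj C i) (obj D i) (f i)) \<and>
     (\<forall>i. zcomp (dif D i) (f i) = zcomp (f (i - 1)) (dif C i))"

text \<open>A map of complexes of F_2-vector spaces (dimensions dC, dD; differentials
  eC, eD; components g) induces an isomorphism on all homology groups
  H_i = ker d_i / im d_(i+1): surjectivity and injectivity written out.\<close>

definition vs_homology_iso ::
  "(int \<Rightarrow> nat) \<Rightarrow> (int \<Rightarrow> bit mat) \<Rightarrow> (int \<Rightarrow> nat) \<Rightarrow> (int \<Rightarrow> bit mat)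
     \<Rightarrow> (int \<Rightarrow> bit mat) \<Rightarrow> bool" where
  "vs_homology_iso dC eC dD eD g \<longleftrightarrow>
     (\<forall>i. \<forall>z \<in> carrier_vec (dD i). eD i *\<^sub>v z = 0\<^sub>v (dD (i - 1)) \<longrightarrow>
         (\<exists>x \<in> carrier_vec (dC i). eC i *\<^sub>v x = 0\<^sub>v (dC (i - 1)) \<and>
            (\<exists>y \<in> carrier_vec (dD (i + 1)). z = g i *\<^sub>v x + eD (i + 1) *\<^sub>v y))) \<and>
     (\<forall>i. \<forall>x \<in> carrier_vec (dC i).
         eC i *\<^sub>v x = 0\<^sub>v (dC (i - 1)) \<and>
         (\<exists>y \<in> carrier_vec (dD (i + 1)). g i *\<^sub>v x = eD (i + 1) *\<^sub>v y) \<longrightarrow>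
         (\<exists>w \<in> carrier_vec (dC (i + 1)). x = eC (i + 1) *\<^sub>v w))"

text \<open>Homology of complexes of Z/2-modules is computed levelwise (Theta and bullet),
  so a quasi-isomorphism is a chain map inducing isomorphisms at both levels.\<close>

definition is_quasi_iso :: "zcx \<Rightarrow> zcx \<Rightarrow> (int \<Rightarrow> zmor) \<Rightarrow> bool" where
  "is_quasi_iso C D f \<longleftrightarrow>
     is_chain_map C D f \<and>
     vs_homology_iso (\<lambda>i. dT (obj C i)) (\<lambda>i. mT (dif C i))
                     (\<lambda>i. dT (obj D i)) (\<lambda>i. mT (dif D i)) (\<lambda>i. mT (f i)) \<and>
     vs_homology_iso (\<lambda>i. dB (obj C i)) (\<lambda>i. mB (dif C i))
                     (\<lambda>i. dB (obj D i)) (\<lambda>i. mB (dif D i)) (\<lambda>i. mB (f i))"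

definition qiso_rel :: "zcx \<Rightarrow> zcx \<Rightarrow> bool" where
  "qiso_rel C D \<longleftrightarrow> is_complex C \<and> is_complex D \<and> (\<exists>f. is_quasi_iso C D f)"

text \<open>Isomorphism in the derived category: connected by a zigzag of quasi-isomorphisms.\<close>

definition D_iso :: "zcx \<Rightarrow> zcx \<Rightarrow> bool" (infix \<open>\<simeq>\<^sub>D\<close> 50) where
  "C \<simeq>\<^sub>D D \<longleftrightarrow> is_complex C \<and> is_complex D \<and>
      (\<lambda>X Y. qiso_rel X Y \<or> qiso_rel Y X)\<^sup>*\<^sup>* C D"

text \<open>(Sigma^n C)_i = C_(i-n); over F_2 no signs are needed.\<close>
definition susp :: "int \<Rightarrow> zcx \<Rightarrow> zcx" (\<open>\<Sigma>\<close>) where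
  "\<Sigma> n C = \<lparr>obj = (\<lambda>i. obj C (i - n)), dif = (\<lambda>i. dif C (i - n))\<rparr>"

text \<open>Linear duals: the dual of a map with matrix A has matrix A^T (dual bases).\<close>
definition zmod_op :: "zmod \<Rightarrow> zmod" where
  "zmod_op M = \<lparr>dT = dT M, dB = dB M, tm = transpose_mat (tm M),
                up = transpose_mat (dn M), dn = transpose_mat (up M)\<rparr>"

definition zmor_dual :: "zmor \<Rightarrow> zmor" where
  "zmor_dual f = \<lparr>mT = transpose_mat (mT f), mB = transpose_mat (mB f)\<rparr>"

text \<open>(C^op)_i = (C_(-i))^op; its differential (C^op)_i -> (C^op)_(i-1) is the dual of
  d^C_(-i+1) : C_(-i+1) -> C_(-i).\<close>
definition cx_op :: "zcx \<Rightarrow> zcx" where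
  "cx_op C = \<lparr>obj = (\<lambda>i. zmod_op (obj C (- i))), dif = (\<lambda>i. zmor_dual (dif C (1 - i)))\<rparr>"

definition zeroM :: zmod where
  "zeroM = \<lparr>dT = 0, dB = 0, tm = 0\<^sub>m 0 0, up = 0\<^sub>m 0 0, dn = 0\<^sub>m 0 0\<rparr>"

definition HM :: zmod where
  "HM = \<lparr>dT = 1, dB = 1, tm = 1\<^sub>m 1, up = 1\<^sub>m 1, dn = 0\<^sub>m 1 1\<rparr>"

definition FM :: zmod where
  "FM = \<lparr>dT = 2, dB = 1,
         tm = mat_of_rows_list 2 [[0, 1], [1, 0]],
         up = mat_of_rows_list 1 [[1], [1]],
         dn = mat_of_rows_list 2 [[1, 1]]\<rparr>"

definition pFH :: zmor where
  "pFH = \<lparr>mT = mat_of_rows_list 2 [[1, 1]], mB = 0\<^sub>m 1 1\<rparr>"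

definition pHF :: zmor where
  "pHF = \<lparr>mT = mat_of_rows_list 1 [[1], [1]], mB = 1\<^sub>m 1\<rparr>"

definition uF :: zmor where
  "uF = \<lparr>mT = 1\<^sub>m 2 + tm FM, mB = 0\<^sub>m 1 1\<rparr>"

datatype kind = KZ | KH | KF

fun kmod :: "kind \<Rightarrow> zmod" where
  "kmod KZ = zeroM" | "kmod KH = HM" | "kmod KF = FM"

fun kdif :: "kind \<Rightarrow> kind \<Rightarrow> zmor" where
  "kdif KH KF = pHF"
| "kdif KF KF = uF"
| "kdif KF KH = pFH"
| "kdif a b = zzero (kmod a) (kmod b)"

definition mkcx :: "(int \<Rightarrow> kind) \<Rightarrow> zcx" where
  "mkcx K = \<lparr>obj = (\<lambda>i. kmod (K i)), dif = (\<lambda>i. kdif (K i) (K (i - 1)))\<rparr>"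

definition Acx :: "nat \<Rightarrow> zcx" where
  "Acx k = mkcx (\<lambda>i. if 0 \<le> i \<and> i \<le> int k then KF else KZ)"

definition Hcx :: "int \<Rightarrow> zcx" where
  "Hcx n =
    (if n = 0 then mkcx (\<lambda>i. if i = 0 then KH else KZ)
     else if n < 0 then
       mkcx (\<lambda>i. if i = - n then KH else if 0 \<le> i \<and> i \<le> - n - 1 then KF else KZ)
     else
       mkcx (\<lambda>i. if i = - n then KH else if - (n - 1) \<le> i \<and> i \<le> 0 then KF else KZ))"

definition Bcx :: "nat \<Rightarrow> zcx" where
  "Bcx r = mkcx (\<lambda>i. if i = 0 \<or> i = - (int r + 2) then KH
                     else if - (int r + 1) \<le> i \<and> i \<le> -1 then KF else KZ)"

end

theory Submission
  imports Defs
begin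

text \<open>
  Dualising over F_2 fixes F and u = 1 + t, and it exchanges the two maps p : H -> F and
  p : F -> H once H is replaced by its dual H^op (t = 1, p^* = 0, p_* = 1), which is not
  isomorphic to H.  So A_k^op is literally Sigma^(-k) A_k, whereas H(n)^op and B_r^op are
  complexes of copies of F and H^op.  Mapping each term of H(-(n+2)), resp. of
  Sigma^(r+4) B_r, to the term of the dual complex in the same degree by the evident map
  (the identity of F, p : H -> F, p : F -> H^op or their composite H -> H^op) gives a chain
  map, and it is a quasi-isomorphism; for n = -1 the norm map u on F takes the place of the
  identity.  As the homology in degree i only involves degrees i - 1, i and i + 1, this is
  a finite computation over F_2 for each window of three consecutive terms that occurs.
\<close>

lemma carrier_vec_0: "carrier_vec 0 = {vNil}"
  by (auto elim: vec_cases)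

lemma carrier_vec_Suc: "carrier_vec (Suc n) = {vCons a v | a v. v \<in> carrier_vec n}"
proof -
  have "x \<in> carrier_vec (Suc n) \<longleftrightarrow> (\<exists>a v. x = vCons a v \<and> v \<in> carrier_vec n)" for x
    by (cases x) (auto dest: arg_cong[where f = dim_vec])
  then show ?thesis
    by blast
qed

lemma ball_carrier_vec_Suc:
  "(\<forall>x\<in>carrier_vec (Suc n). P x) \<longleftrightarrow> (\<forall>a. \<forall>v\<in>carrier_vec n. P (vCons a v))"
  by (auto simp: carrier_vec_Suc)

lemma bex_carrier_vec_Suc:
  "(\<exists>x\<in>carrier_vec (Suc n). P x) \<longleftrightarrow> (\<exists>a. \<exists>v\<in>carrier_vec n. P (vCons a v))"
  by (auto simp: carrier_vec_Suc)

lemma ex_carrier_vec: "\<exists>v :: 'a::zero vec. v \<in> carrier_vec n"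
  using zero_carrier_vec by blast

lemma vCons_add_vCons: "vCons a v + vCons b w = vCons (a + b) (v + w)"
  by (rule eq_vecI) (auto simp: vec_index_vCons)

lemma vNil_add_vNil: "vNil + vNil = vNil"
  by auto

lemma carrier_mat_iff: "A \<in> carrier_mat nr nc \<longleftrightarrow> dim_row A = nr \<and> dim_col A = nc"
  unfolding carrier_mat_def by blast

lemma mat_eq_iff_mult_vec:
  fixes A B :: "'a::semiring_1 mat"
  shows "A = B \<longleftrightarrow> dim_row A = dim_row B \<and> dim_col A = dim_col B \<and>
     (\<forall>v\<in>carrier_vec (dim_col A). A *\<^sub>v v = B *\<^sub>v v)"
proof (intro iffI; (elim conjE)?)
  assume dims: "dim_row A = dim_row B" "dim_col A = dim_col B"
    and action: "\<forall>v\<in>carrier_vec (dim_col A). A *\<^sub>v v = B *\<^sub>v v"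
  show "A = B"
  proof (rule eq_matI)
    fix i j assume "i < dim_row B" "j < dim_col B"
    have "A *\<^sub>v unit_vec (dim_col A) j = B *\<^sub>v unit_vec (dim_col A) j"
      using action by simp
    moreover have "A $$ (i, j) = (A *\<^sub>v unit_vec (dim_col A) j) $ i"
      "B $$ (i, j) = (B *\<^sub>v unit_vec (dim_col A) j) $ i"
      using dims \<open>i < dim_row B\<close> \<open>j < dim_col B\<close> by simp_all
    ultimately show "A $$ (i, j) = B $$ (i, j)"
      by simp
  qed (use dims in auto)
qed simp

lemma mult_mat_of_rows_list_vec:
  assumes "\<forall>r\<in>set rs. length r = n" "dim_vec v = n"
  shows "mat_of_rows_list n rs *\<^sub>v v = vec_of_list (map (\<lambda>r. vec_of_list r \<bullet> v) rs)"
  using assms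
  by (intro eq_vecI) (auto simp: mat_of_rows_list_def scalar_prod_def row_def vec_of_list_index)

lemma dim_mat_of_rows_list:
  "dim_row (mat_of_rows_list n rs) = length rs" "dim_col (mat_of_rows_list n rs) = n"
  by (simp_all add: mat_of_rows_list_def)

lemma mult_mat_vec_assoc:
  "dim_col A = dim_row B \<Longrightarrow> dim_vec v = dim_col B \<Longrightarrow> (A * B) *\<^sub>v v = A *\<^sub>v (B *\<^sub>v v)"
  by (rule assoc_mult_mat_vec) (auto intro: carrier_vecI)

lemma one_mult_vec: "dim_vec v = n \<Longrightarrow> 1\<^sub>m n *\<^sub>v (v :: 'a::semiring_1 vec) = v"
  by (rule one_mult_mat_vec[OF carrier_vecI])

lemma zero_mult_vec: "dim_vec v = n \<Longrightarrow> 0\<^sub>m m n *\<^sub>v (v :: 'a::semiring_0 vec) = 0\<^sub>v m"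
  by (intro eq_vecI) (auto simp: scalar_prod_def)

lemma add_mult_vec:
  "dim_row A = dim_row B \<Longrightarrow> dim_col A = dim_col B \<Longrightarrow> dim_vec v = dim_col A \<Longrightarrow>
     (A + B) *\<^sub>v v = A *\<^sub>v v + B *\<^sub>v v"
  by (rule add_mult_distrib_mat_vec) (auto intro: carrier_vecI)

lemma all_bit: "(\<forall>a::bit. P a) \<longleftrightarrow> P 0 \<and> P 1"
  by (metis bit_not_zero_iff)

lemma ex_bit: "(\<exists>a::bit. P a) \<longleftrightarrow> P 0 \<or> P 1"
  by (metis bit_not_zero_iff)

lemmas bit_mat_eval =
  mat_eq_iff_mult_vec carrier_mat_iff carrier_vec_0 ex_carrier_vec
  ball_carrier_vec_Suc bex_carrier_vec_Suc
  zero_vec_Suc numeral_2_eq_2 vCons_add_vCons vNil_add_vNil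
  mult_mat_of_rows_list_vec dim_mat_of_rows_list mult_mat_vec_assoc one_mult_vec zero_mult_vec
  add_mult_vec all_bit ex_bit

datatype cell = Z | H | F | Hop

definition HopM :: zmod where
  "HopM = \<lparr>dT = 1, dB = 1, tm = 1\<^sub>m 1, up = 0\<^sub>m 1 1, dn = 1\<^sub>m 1\<rparr>"

definition pFHop :: zmor where
  "pFHop = \<lparr>mT = mat_of_rows_list 2 [[1, 1]], mB = 1\<^sub>m 1\<rparr>"

definition pHopF :: zmor where
  "pHopF = \<lparr>mT = mat_of_rows_list 1 [[1], [1]], mB = 0\<^sub>m 1 1\<rparr>"

fun cell_mod :: "cell \<Rightarrow> zmod" where
  "cell_mod Z = zeroM"
| "cell_mod H = HM"
| "cell_mod F = FM"
| "cell_mod Hop = HopM"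

fun cell_dif :: "cell \<Rightarrow> cell \<Rightarrow> zmor" where
  "cell_dif H F = pHF"
| "cell_dif F F = uF"
| "cell_dif F H = pFH"
| "cell_dif F Hop = pFHop"
| "cell_dif Hop F = pHopF"
| "cell_dif a b = zzero (cell_mod a) (cell_mod b)"

definition cells :: "(int \<Rightarrow> cell) \<Rightarrow> zcx" where
  "cells L = \<lparr>obj = (\<lambda>i. cell_mod (L i)), dif = (\<lambda>i. cell_dif (L i) (L (i - 1)))\<rparr>"

lemma uF_eq: "uF = \<lparr>mT = mat_of_rows_list 2 [[1, 1], [1, 1]], mB = 0\<^sub>m 1 1\<rparr>"
  by (simp add: uF_def FM_def bit_mat_eval)

lemmas cell_eqs = zeroM_def HM_def FM_def HopM_def pHF_def pFH_def uF_eq pFHop_def pHopF_def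
  zzero_def zcomp_def

lemma is_zmod_cell_mod: "is_zmod (cell_mod a)"
  by (cases a) (simp_all add: is_zmod_def cell_eqs bit_mat_eval)

lemma is_zmor_cell_dif: "is_zmor (cell_mod a) (cell_mod b) (cell_dif a b)"
  by (cases a; cases b) (simp_all add: is_zmor_def cell_eqs bit_mat_eval)

lemma cell_dif_comp_zero:
  "(a, b, c) \<notin> {(H, F, Hop), (F, H, F), (F, Hop, F)} \<Longrightarrow>
     zcomp (cell_dif b c) (cell_dif a b) = zzero (cell_mod a) (cell_mod c)"
  by (cases a; cases b; cases c) (simp_all add: cell_eqs bit_mat_eval)

lemma is_complex_cells:
  assumes "\<And>i. (L i, L (i - 1), L (i - 2)) \<notin> {(H, F, Hop), (F, H, F), (F, Hop, F)}"
  shows "is_complex (cells L)"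
proof -
  have "i - 1 - 1 = i - 2" for i :: int
    by simp
  then show ?thesis
    unfolding is_complex_def cells_def
    using is_zmod_cell_mod is_zmor_cell_dif cell_dif_comp_zero[OF assms] by simp
qed

fun cell_of_kind :: "kind \<Rightarrow> cell" where
  "cell_of_kind KZ = Z"
| "cell_of_kind KH = H"
| "cell_of_kind KF = F"

fun op_cell :: "kind \<Rightarrow> cell" where
  "op_cell KZ = Z"
| "op_cell KH = Hop"
| "op_cell KF = F"

lemma mkcx_eq_cells: "mkcx K = cells (\<lambda>i. cell_of_kind (K i))"
proof -
  have "kmod a = cell_mod (cell_of_kind a)" "kdif a b = cell_dif (cell_of_kind a) (cell_of_kind b)"
    for a b by (cases a; cases b; simp)+
  then show ?thesis
    by (simp add: mkcx_def cells_def)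
qed

lemma susp_cells: "\<Sigma> n (cells L) = cells (\<lambda>i. L (i - n))"
  by (simp add: susp_def cells_def algebra_simps)

lemma zmod_op_kmod: "zmod_op (kmod a) = cell_mod (op_cell a)"
  by (cases a)
    (auto simp: zmod_op_def cell_eqs mat_of_rows_list_def numeral_2_eq_2 less_Suc_eq intro!: eq_matI)

lemma zmor_dual_kdif: "zmor_dual (kdif b a) = cell_dif (op_cell a) (op_cell b)"
  by (cases a; cases b)
    (auto simp: zmor_dual_def cell_eqs mat_of_rows_list_def numeral_2_eq_2 less_Suc_eq intro!: eq_matI)

lemma cx_op_mkcx: "cx_op (mkcx K) = cells (\<lambda>i. op_cell (K (- i)))"
  by (simp add: cx_op_def mkcx_def cells_def zmod_op_kmod zmor_dual_kdif)

definition homology_iso_at ::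
  "nat \<Rightarrow> nat \<Rightarrow> nat \<Rightarrow> bit mat \<Rightarrow> bit mat \<Rightarrow> nat \<Rightarrow> nat \<Rightarrow> nat \<Rightarrow> bit mat \<Rightarrow> bit mat
     \<Rightarrow> bit mat \<Rightarrow> bool" where
  "homology_iso_at c0 c1 c2 eC1 eC2 d0 d1 d2 eD1 eD2 g \<longleftrightarrow>
    (\<forall>z \<in> carrier_vec d1. eD1 *\<^sub>v z = 0\<^sub>v d0 \<longrightarrow>
       (\<exists>x \<in> carrier_vec c1. eC1 *\<^sub>v x = 0\<^sub>v c0 \<and>
          (\<exists>y \<in> carrier_vec d2. z = g *\<^sub>v x + eD2 *\<^sub>v y))) \<and>
    (\<forall>x \<in> carrier_vec c1.
       eC1 *\<^sub>v x = 0\<^sub>v c0 \<and> (\<exists>y \<in> carrier_vec d2. g *\<^sub>v x = eD2 *\<^sub>v y) \<longrightarrow>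
       (\<exists>w \<in> carrier_vec c2. x = eC2 *\<^sub>v w))"

lemma vs_homology_iso_iff_homology_iso_at:
  "vs_homology_iso dC eC dD eD g \<longleftrightarrow>
     (\<forall>i. homology_iso_at (dC (i - 1)) (dC i) (dC (i + 1)) (eC i) (eC (i + 1))
                          (dD (i - 1)) (dD i) (dD (i + 1)) (eD i) (eD (i + 1)) (g i))"
  unfolding vs_homology_iso_def homology_iso_at_def by blast

definition window_qiso ::
  "(cell \<Rightarrow> cell \<Rightarrow> zmor) \<Rightarrow> cell \<Rightarrow> cell \<Rightarrow> cell \<Rightarrow> cell \<Rightarrow> cell \<Rightarrow> cell \<Rightarrow> bool" where
  "window_qiso f a0 a1 a2 b0 b1 b2 \<longleftrightarrow>
     is_zmor (cell_mod a1) (cell_mod b1) (f a1 b1) \<and>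
     zcomp (cell_dif b1 b0) (f a1 b1) = zcomp (f a0 b0) (cell_dif a1 a0) \<and>
     homology_iso_at (dT (cell_mod a0)) (dT (cell_mod a1)) (dT (cell_mod a2))
       (mT (cell_dif a1 a0)) (mT (cell_dif a2 a1))
       (dT (cell_mod b0)) (dT (cell_mod b1)) (dT (cell_mod b2))
       (mT (cell_dif b1 b0)) (mT (cell_dif b2 b1)) (mT (f a1 b1)) \<and>
     homology_iso_at (dB (cell_mod a0)) (dB (cell_mod a1)) (dB (cell_mod a2))
       (mB (cell_dif a1 a0)) (mB (cell_dif a2 a1))
       (dB (cell_mod b0)) (dB (cell_mod b1)) (dB (cell_mod b2))
       (mB (cell_dif b1 b0)) (mB (cell_dif b2 b1)) (mB (f a1 b1))"

lemma is_quasi_iso_cells: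
  assumes "\<And>i. window_qiso f (KC (i - 1)) (KC i) (KC (i + 1)) (KD (i - 1)) (KD i) (KD (i + 1))"
  shows "is_quasi_iso (cells KC) (cells KD) (\<lambda>i. f (KC i) (KD i))"
  using assms
  unfolding is_quasi_iso_def is_chain_map_def vs_homology_iso_iff_homology_iso_at window_qiso_def
    cells_def
  by simp

lemma D_iso_refl: "is_complex C \<Longrightarrow> C \<simeq>\<^sub>D C"
  by (simp add: D_iso_def)

lemma D_iso_of_quasi_iso: "is_complex C \<Longrightarrow> is_complex D \<Longrightarrow> is_quasi_iso C D f \<Longrightarrow> D \<simeq>\<^sub>D C"
  unfolding D_iso_def qiso_rel_def by (blast intro: r_into_rtranclp)

lemma D_iso_cellsI:
  assumes "\<And>i. (KC i, KC (i - 1), KC (i - 2)) \<notin> {(H, F, Hop), (F, H, F), (F, Hop, F)}"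
    and "\<And>i. (KD i, KD (i - 1), KD (i - 2)) \<notin> {(H, F, Hop), (F, H, F), (F, Hop, F)}"
    and "\<And>i. window_qiso f (KC (i - 1)) (KC i) (KC (i + 1)) (KD (i - 1)) (KD i) (KD (i + 1))"
  shows "cells KD \<simeq>\<^sub>D cells KC"
  using assms by (blast intro: D_iso_of_quasi_iso is_complex_cells is_quasi_iso_cells)

fun canon_mor :: "cell \<Rightarrow> cell \<Rightarrow> zmor" where
  "canon_mor F F = \<lparr>mT = 1\<^sub>m 2, mB = 1\<^sub>m 1\<rparr>"
| "canon_mor H F = pHF"
| "canon_mor F Hop = pFHop"
| "canon_mor H Hop = zcomp pFHop pHF"
| "canon_mor a b = zzero (cell_mod a) (cell_mod b)"

fun norm_mor :: "cell \<Rightarrow> cell \<Rightarrow> zmor" where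
  "norm_mor F F = uF"
| "norm_mor a b = zzero (cell_mod a) (cell_mod b)"

text \<open>The windows (C_(i-1), C_i, C_(i+1)) and (D_(i-1), D_i, D_(i+1)) occurring in the
  pairs of complexes C, D compared below.\<close>

lemma canon_mor_window_qiso [simp]:
  "window_qiso canon_mor F F F F F F"
  "window_qiso canon_mor F F F F F Hop"
  "window_qiso canon_mor F F F F Hop Z"
  "window_qiso canon_mor F F H Hop Z Z"
  "window_qiso canon_mor F F Z F F Z"
  "window_qiso canon_mor F H Z Z Z Z"
  "window_qiso canon_mor F Z Z F Z Z"
  "window_qiso canon_mor H F F F F F"
  "window_qiso canon_mor H F F F F Hop"
  "window_qiso canon_mor H F F F Hop Z"
  "window_qiso canon_mor H F H Hop Z Z"
  "window_qiso canon_mor H F Z F F Z"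
  "window_qiso canon_mor H Z Z F Z Z"
  "window_qiso canon_mor H Z Z Z Z Z"
  "window_qiso canon_mor Z F F Z F F"
  "window_qiso canon_mor Z F F Z F Hop"
  "window_qiso canon_mor Z F F Z Hop Z"
  "window_qiso canon_mor Z H F F F F"
  "window_qiso canon_mor Z H F F F Hop"
  "window_qiso canon_mor Z H F F Hop Z"
  "window_qiso canon_mor Z H Z F F Z"
  "window_qiso canon_mor Z Z F Z Z F"
  "window_qiso canon_mor Z Z F Z Z Hop"
  "window_qiso canon_mor Z Z H Hop F F"
  "window_qiso canon_mor Z Z H Hop F Hop"
  "window_qiso canon_mor Z Z Z Z Hop F"
  "window_qiso canon_mor Z Z Z Z Z Hop"
  "window_qiso canon_mor Z Z Z Z Z Z"
  by (simp_all add: window_qiso_def homology_iso_at_def is_zmor_def cell_eqs bit_mat_eval)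

lemma norm_mor_window_qiso [simp]:
  "window_qiso norm_mor F H Z F Z Z"
  "window_qiso norm_mor H Z Z Z Z Z"
  "window_qiso norm_mor Z F H Hop F Z"
  "window_qiso norm_mor Z Z F Z Hop F"
  "window_qiso norm_mor Z Z Z Z Z Hop"
  "window_qiso norm_mor Z Z Z Z Z Z"
  by (simp_all add: window_qiso_def homology_iso_at_def is_zmor_def cell_eqs bit_mat_eval)

lemma cx_op_Acx: "cx_op (Acx k) \<simeq>\<^sub>D \<Sigma> (- int k) (Acx k)"
proof -
  let ?A = "\<lambda>i. if - int k \<le> i \<and> i \<le> 0 then F else Z"
  have "cx_op (Acx k) = cells ?A"
    unfolding Acx_def cx_op_mkcx by (auto intro!: arg_cong[where f = cells])
  moreover have "\<Sigma> (- int k) (Acx k) = cells ?A"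
    unfolding Acx_def mkcx_eq_cells susp_cells by (auto intro!: arg_cong[where f = cells])
  moreover have "is_complex (cells ?A)"
    by (rule is_complex_cells) auto
  ultimately show ?thesis
    by (simp add: D_iso_refl)
qed

lemma cx_op_Hcx_nonneg:
  assumes "0 \<le> n"
  shows "cx_op (Hcx n) \<simeq>\<^sub>D Hcx (- (n + 2))"
proof -
  let ?C = "\<lambda>i. if i = n + 2 then H else if 0 \<le> i \<and> i \<le> n + 1 then F else Z"
  let ?D = "\<lambda>i. if i = n then Hop else if 0 \<le> i \<and> i \<le> n - 1 then F else Z"
  have "Hcx (- (n + 2)) = cells ?C"
    using assms unfolding Hcx_def mkcx_eq_cells by (auto intro!: arg_cong[where f = cells])
  moreover have "cx_op (Hcx n) = cells ?D"
    using assms by (auto simp: Hcx_def cx_op_mkcx intro!: arg_cong[where f = cells])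
  moreover have "cells ?D \<simeq>\<^sub>D cells ?C"
    by (rule D_iso_cellsI[where f = canon_mor]) (use assms in auto)
  ultimately show ?thesis
    by simp
qed

text \<open>Here the identity of F does not work: in degree 0 the Theta-homology is F_2^2 modulo
  the diagonal for H(-1) and the diagonal itself for H(-1)^op, and of the equivariant maps
  F -> F only u = 1 + t induces an isomorphism between the two.\<close>

lemma cx_op_Hcx_minus_one: "cx_op (Hcx (- 1)) \<simeq>\<^sub>D Hcx (- (- 1 + 2))"
proof -
  let ?C = "\<lambda>i. if i = 1 then H else if i = 0 then F else Z"
  let ?D = "\<lambda>i. if i = - 1 then Hop else if i = 0 then F else Z"
  have "Hcx (- (- 1 + 2)) = cells ?C"
    unfolding Hcx_def mkcx_eq_cells by (auto intro!: arg_cong[where f = cells])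
  moreover have "cx_op (Hcx (- 1)) = cells ?D"
    by (auto simp: Hcx_def cx_op_mkcx intro!: arg_cong[where f = cells])
  moreover have "cells ?D \<simeq>\<^sub>D cells ?C"
    by (rule D_iso_cellsI[where f = norm_mor]) auto
  ultimately show ?thesis
    by simp
qed

lemma cx_op_Hcx_le_minus_two:
  assumes "n \<le> - 2"
  shows "cx_op (Hcx n) \<simeq>\<^sub>D Hcx (- (n + 2))"
proof -
  let ?C = "\<lambda>i. if i = n + 2 then H else if n + 3 \<le> i \<and> i \<le> 0 then F else Z"
  let ?D = "\<lambda>i. if i = n then Hop else if n + 1 \<le> i \<and> i \<le> 0 then F else Z"
  have "Hcx (- (n + 2)) = cells ?C"
    using assms unfolding Hcx_def mkcx_eq_cells by (auto intro!: arg_cong[where f = cells])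
  moreover have "cx_op (Hcx n) = cells ?D"
    using assms by (auto simp: Hcx_def cx_op_mkcx intro!: arg_cong[where f = cells])
  moreover have "cells ?D \<simeq>\<^sub>D cells ?C"
    by (rule D_iso_cellsI[where f = canon_mor]) (use assms in auto)
  ultimately show ?thesis
    by simp
qed

lemma cx_op_Bcx: "cx_op (Bcx r) \<simeq>\<^sub>D \<Sigma> (int r + 4) (Bcx r)"
proof -
  let ?C = "\<lambda>i. if i = int r + 4 then H else if i = 2 then H
                 else if 3 \<le> i \<and> i \<le> int r + 3 then F else Z"
  let ?D = "\<lambda>i. if i = 0 then Hop else if i = int r + 2 then Hop
                 else if 1 \<le> i \<and> i \<le> int r + 1 then F else Z"
  have "\<Sigma> (int r + 4) (Bcx r) = cells ?C"
    unfolding Bcx_def mkcx_eq_cells susp_cells by (auto intro!: arg_cong[where f = cells])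
  moreover have "cx_op (Bcx r) = cells ?D"
    unfolding Bcx_def cx_op_mkcx by (auto intro!: arg_cong[where f = cells])
  moreover have "cells ?D \<simeq>\<^sub>D cells ?C"
    by (rule D_iso_cellsI[where f = canon_mor]) auto
  ultimately show ?thesis
    by simp
qed

theorem proposition4p13:
  shows "(\<forall>k::nat. cx_op (Acx k) \<simeq>\<^sub>D \<Sigma> (- int k) (Acx k)) \<and>
         (\<forall>n::int. cx_op (Hcx n) \<simeq>\<^sub>D Hcx (- (n + 2))) \<and>
         (\<forall>r::nat. cx_op (Bcx r) \<simeq>\<^sub>D \<Sigma> (int r + 4) (Bcx r))"
proof (intro conjI allI)
  fix n :: int
  consider "0 \<le> n" | "n = - 1" | "n \<le> - 2"
    by linarith
  then show "cx_op (Hcx n) \<simeq>\<^sub>D Hcx (- (n + 2))"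
    by cases (use cx_op_Hcx_nonneg cx_op_Hcx_minus_one cx_op_Hcx_le_minus_two in auto)
qed (rule cx_op_Acx, rule cx_op_Bcx)

end
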